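(* Let $(\mathbb{V},\Omega)$ be a base-normed space with closed cone $K$ and base $\Omega$, and let $\Omega_o$ be a closed convex subset of $\Omega$. Then the cone $K_o=\{ta:a\in\Omega_o,t\ge0\}$ generated by $\Omega_o$ is closed. Moreover, if $\mathbb{V}$ is complete in its base norm, then $\mathbb{V}_o=K_o-K_o$ is complete in the base norm generated by $\Omega_o$.
   Context: A base-normed space $(\mathbb{V},\Omega)$: $\Omega$ is a convex subset of a real vector space such that every nonzero element of $K=\{t\alpha:t\ge0,\alpha\in\Omega\}$ has a unique representation $t\alpha$, $t>0$, $\alpha\in\Omega$ (equivalently there is a linear functional $u$ with $u\equiv1$ on $\Omega$); $\mathbb{V}=K-K$; and the Minkowski functional $\|x\|=\inf\{t\ge0:x\in t\,\mathrm{conv}(\Omega\cup-\Omega)\}$ is a norm (the base norm). Closedness refers to the base-norm topology of $\mathbb{V}$. The base norm generated by $\Omega_o$ on $\mathbb{V}_o$ is the Minkowski functional of $\mathrm{conv}(\Omega_o\cup-\Omega_o)$. *)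

theory Defs
  imports "HOL-Analysis.Analysis"
begin

definition gen_cone :: "'v::real_vector set \<Rightarrow> 'v set" where
  "gen_cone S = {t *\<^sub>R a | t a. a \<in> S \<and> t \<ge> 0}"

definition minkowski :: "'v::real_vector set \<Rightarrow> 'v \<Rightarrow> real" where
  "minkowski C x = Inf {t. t \<ge> 0 \<and> x \<in> (\<lambda>y. t *\<^sub>R y) ` C}"

definition base_norm :: "'v::real_vector set \<Rightarrow> 'v \<Rightarrow> real" where
  "base_norm \<Omega> = minkowski (convex hull (\<Omega> \<union> uminus ` \<Omega>))"

text \<open>A base-normed space: the whole (normed) type is \<open>\<V>\<close>, its norm is the base norm of \<open>\<Omega>\<close>.\<close>
definition base_normed_space :: "'v::real_normed_vector set \<Rightarrow> bool" where
  "base_normed_space \<Omega> \<longleftrightarrow>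
     convex \<Omega> \<and>
     (\<forall>x \<in> gen_cone \<Omega> - {0}. \<exists>!p. fst p > 0 \<and> snd p \<in> \<Omega> \<and> x = fst p *\<^sub>R snd p) \<and>
     UNIV = {a - b | a b. a \<in> gen_cone \<Omega> \<and> b \<in> gen_cone \<Omega>} \<and>
     (\<forall>x. norm x = base_norm \<Omega> x)"

definition complete_wrt :: "('v::real_vector \<Rightarrow> real) \<Rightarrow> 'v set \<Rightarrow> bool" where
  "complete_wrt N S \<longleftrightarrow>
     (\<forall>x. (\<forall>n. x n \<in> S) \<and> (\<forall>e>0. \<exists>M. \<forall>m\<ge>M. \<forall>n\<ge>M. N (x m - x n) < e)
        \<longrightarrow> (\<exists>y\<in>S. (\<lambda>n. N (x n - y)) \<longlonglongrightarrow> 0))"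

end

theory Submission
  imports Defs
begin

text \<open>
  Uniqueness of the representation \<open>t *\<^sub>R \<alpha>\<close> puts the base on the unit sphere of the base
  norm: if \<open>\<alpha> = s *\<^sub>R a - r *\<^sub>R b\<close> with \<open>a, b \<in> \<Omega>\<close>, then \<open>\<alpha> + r *\<^sub>R b = (1 + r) *\<^sub>R w\<close>
  for some \<open>w \<in> \<Omega>\<close>, so \<open>s = 1 + r\<close> and the cost \<open>s + r\<close> is at least 1 (unless \<open>0 \<in> \<Omega>\<close>,
  which makes the space trivial). Hence \<open>norm (t *\<^sub>R \<alpha>) = t\<close>, the normalisation
  \<open>x /\<^sub>R norm x\<close> maps the nonzero elements of the cone of \<open>\<Omega>o\<close> continuously into \<open>\<Omega>o\<close>,
  and closedness of \<open>\<Omega>o\<close> alone gives closedness of that cone. It also identifies the base norm of \<open>\<Omega>o\<close> with the infimum of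
  \<open>norm p + norm q\<close> over decompositions \<open>z = p - q\<close> in the cone \<open>K\<close>. Completeness for this
  norm is the classical argument: a Cauchy sequence has a subsequence whose steps split as
  \<open>p k - q k\<close> with \<open>norm (p k) + norm (q k) < (1/2)^k\<close>; both series converge in the
  complete space, and their tails stay in the closed convex cone \<open>K\<close>, which controls the
  distance to the limit.
\<close>

lemma convex_hull_Un_convex:
  fixes S T :: "'a::real_vector set"
  assumes "convex S" "S \<noteq> {}" "convex T" "T \<noteq> {}"
  shows "convex hull (S \<union> T) =
    {u *\<^sub>R s + v *\<^sub>R t | u v s t. 0 \<le> u \<and> 0 \<le> v \<and> u + v = 1 \<and> s \<in> S \<and> t \<in> T}"
proof -
  define F where "F b = (if b then S else T)" for b
  have "S \<union> T = \<Union> (F ` UNIV)" by (auto simp: F_def)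
  then have "convex hull (S \<union> T) =
    {\<Sum>i\<in>UNIV. c i *\<^sub>R s i | c s. (\<forall>i. 0 \<le> c i) \<and> sum c UNIV = 1 \<and> (\<forall>i. s i \<in> F i)}"
    using convex_hull_finite_union[of UNIV F] assms by (simp add: F_def)
  also have "\<dots> = {u *\<^sub>R s + v *\<^sub>R t | u v s t. 0 \<le> u \<and> 0 \<le> v \<and> u + v = 1 \<and> s \<in> S \<and> t \<in> T}"
  proof (intro set_eqI iffI)
    fix x assume "x \<in> {\<Sum>i\<in>UNIV. c i *\<^sub>R s i | c s. (\<forall>i. 0 \<le> c i) \<and> sum c UNIV = 1 \<and> (\<forall>i. s i \<in> F i)}"
    then obtain c s where x: "x = (\<Sum>i\<in>UNIV. c i *\<^sub>R s i)" "sum c UNIV = 1"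
      and c: "\<forall>i. 0 \<le> c i" and s: "\<forall>i. s i \<in> F i"
      by blast
    have "x = c True *\<^sub>R s True + c False *\<^sub>R s False" "c True + c False = 1"
      using x by (simp_all add: UNIV_bool add.commute)
    moreover have "s True \<in> S" "s False \<in> T" "0 \<le> c True" "0 \<le> c False"
      using s c by (auto simp: F_def dest: spec[of _ True] spec[of _ False])
    ultimately show "x \<in> {u *\<^sub>R s + v *\<^sub>R t | u v s t. 0 \<le> u \<and> 0 \<le> v \<and> u + v = 1 \<and> s \<in> S \<and> t \<in> T}"
      by blast
  next
    fix x assume "x \<in> {u *\<^sub>R s + v *\<^sub>R t | u v s t. 0 \<le> u \<and> 0 \<le> v \<and> u + v = 1 \<and> s \<in> S \<and> t \<in> T}"
    then obtain u v s t where "x = u *\<^sub>R s + v *\<^sub>R t" "0 \<le> u" "0 \<le> v" "u + v = 1" "s \<in> S" "t \<in> T"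
      by blast
    then show "x \<in> {\<Sum>i\<in>UNIV. c i *\<^sub>R s i | c s. (\<forall>i. 0 \<le> c i) \<and> sum c UNIV = 1 \<and> (\<forall>i. s i \<in> F i)}"
      by (intro CollectI exI[of _ "\<lambda>b. if b then u else v"] exI[of _ "\<lambda>b. if b then s else t"])
        (auto simp: UNIV_bool F_def add.commute)
  qed
  finally show ?thesis .
qed

lemma convex_hull_Un_negations:
  fixes S :: "'a::real_vector set"
  assumes "convex S"
  shows "convex hull (S \<union> uminus ` S) =
    {u *\<^sub>R a - v *\<^sub>R b | u v a b. 0 \<le> u \<and> 0 \<le> v \<and> u + v = 1 \<and> a \<in> S \<and> b \<in> S}"
proof (cases "S = {}")
  case False
  then have "convex hull (S \<union> uminus ` S) =
    {u *\<^sub>R a + v *\<^sub>R c | u v a c. 0 \<le> u \<and> 0 \<le> v \<and> u + v = 1 \<and> a \<in> S \<and> c \<in> uminus ` S}"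
    by (intro convex_hull_Un_convex assms convex_negations) auto
  also have "\<dots> = {u *\<^sub>R a - v *\<^sub>R b | u v a b. 0 \<le> u \<and> 0 \<le> v \<and> u + v = 1 \<and> a \<in> S \<and> b \<in> S}"
    by auto (blast, force)
  finally show ?thesis .
qed simp

lemma base_norm_eq_Inf_decompositions:
  fixes S :: "'v::real_vector set"
  assumes "convex S"
  shows "base_norm S x =
    Inf {s + r | s r a b. a \<in> S \<and> b \<in> S \<and> 0 \<le> s \<and> 0 \<le> r \<and> x = s *\<^sub>R a - r *\<^sub>R b}"
proof -
  let ?C = "convex hull (S \<union> uminus ` S)"
  note C = convex_hull_Un_negations[OF assms]
  have "{t. t \<ge> 0 \<and> x \<in> (\<lambda>y. t *\<^sub>R y) ` ?C} =
    {s + r | s r a b. a \<in> S \<and> b \<in> S \<and> 0 \<le> s \<and> 0 \<le> r \<and> x = s *\<^sub>R a - r *\<^sub>R b}"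
  proof (intro set_eqI iffI)
    fix t assume "t \<in> {t. t \<ge> 0 \<and> x \<in> (\<lambda>y. t *\<^sub>R y) ` ?C}"
    then obtain u v a b where "0 \<le> t" "0 \<le> u" "0 \<le> v" "u + v = 1" "a \<in> S" "b \<in> S"
      and "x = t *\<^sub>R (u *\<^sub>R a - v *\<^sub>R b)"
      unfolding C by blast
    moreover from this have "x = (t * u) *\<^sub>R a - (t * v) *\<^sub>R b" "t = t * u + t * v"
      by (simp_all add: scaleR_diff_right flip: distrib_left)
    ultimately show "t \<in> {s + r | s r a b. a \<in> S \<and> b \<in> S \<and> 0 \<le> s \<and> 0 \<le> r \<and> x = s *\<^sub>R a - r *\<^sub>R b}"
      by fastforce
  next
    fix t assume "t \<in> {s + r | s r a b. a \<in> S \<and> b \<in> S \<and> 0 \<le> s \<and> 0 \<le> r \<and> x = s *\<^sub>R a - r *\<^sub>R b}"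
    then obtain s r a b where sr: "t = s + r" "a \<in> S" "b \<in> S" "0 \<le> s" "0 \<le> r" "x = s *\<^sub>R a - r *\<^sub>R b"
      by blast
    show "t \<in> {t. t \<ge> 0 \<and> x \<in> (\<lambda>y. t *\<^sub>R y) ` ?C}"
    proof (cases "t = 0")
      case True
      with sr have "s = 0" "r = 0" by auto
      with sr have "x = 0 *\<^sub>R a" "a \<in> ?C" by (auto intro: hull_inc)
      with True show ?thesis by auto
    next
      case False
      with sr have "s / t + r / t = 1" "x = t *\<^sub>R ((s / t) *\<^sub>R a - (r / t) *\<^sub>R b)"
        by (simp_all add: add_divide_distrib[symmetric] scaleR_diff_right)
      with sr have "x \<in> (\<lambda>y. t *\<^sub>R y) ` ?C"
        unfolding C by (intro image_eqI[of _ _ "(s / t) *\<^sub>R a - (r / t) *\<^sub>R b"]) fastforce+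
      with sr show ?thesis by auto
    qed
  qed
  then show ?thesis by (simp add: base_norm_def minkowski_def)
qed

lemma base_normed_space_scaling_unique:
  assumes "base_normed_space \<Omega>" "\<alpha> \<in> \<Omega>" "\<beta> \<in> \<Omega>" "0 < s" "0 < t"
    and "s *\<^sub>R \<alpha> = t *\<^sub>R \<beta>" "s *\<^sub>R \<alpha> \<noteq> 0"
  shows "s = t"
proof -
  have "s *\<^sub>R \<alpha> \<in> gen_cone \<Omega> - {0}"
    using assms unfolding gen_cone_def by fastforce
  then have "\<exists>!p. fst p > 0 \<and> snd p \<in> \<Omega> \<and> s *\<^sub>R \<alpha> = fst p *\<^sub>R snd p"
    using assms(1) unfolding base_normed_space_def by blast
  then have "(s, \<alpha>) = (t, \<beta>)"
    using assms by (metis fst_conv snd_conv)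
  then show ?thesis by simp
qed

lemma base_normed_space_base_subset_0:
  assumes "base_normed_space \<Omega>" "0 \<in> \<Omega>"
  shows "\<Omega> \<subseteq> {0}"
proof
  fix \<alpha> assume \<alpha>: "\<alpha> \<in> \<Omega>"
  have "(1/2) *\<^sub>R \<alpha> + (1/2) *\<^sub>R 0 \<in> \<Omega>"
    using assms(1) \<alpha> assms(2) unfolding base_normed_space_def by (intro convexD) auto
  then have "\<alpha> = 0 \<or> (1::real) = 2"
    using base_normed_space_scaling_unique[OF assms(1) \<alpha>, of "(1/2) *\<^sub>R \<alpha>" 1 2] by auto
  then show "\<alpha> \<in> {0}" by simp
qed

lemma norm_scaleR_base:
  assumes "base_normed_space \<Omega>" "0 \<notin> \<Omega>" "\<alpha> \<in> \<Omega>" "0 \<le> t"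
  shows "norm (t *\<^sub>R \<alpha>) = t"
proof -
  have conv: "convex \<Omega>" and norm_eq: "norm \<alpha> = base_norm \<Omega> \<alpha>"
    using assms(1) unfolding base_normed_space_def by auto
  let ?D = "{s + r | s r a b. a \<in> \<Omega> \<and> b \<in> \<Omega> \<and> 0 \<le> s \<and> 0 \<le> r \<and> \<alpha> = s *\<^sub>R a - r *\<^sub>R b}"
  have "1 \<le> d" if "d \<in> ?D" for d
  proof -
    obtain s r a b where d: "d = s + r" "a \<in> \<Omega>" "b \<in> \<Omega>" "0 \<le> s" "0 \<le> r"
      and \<alpha>_eq: "\<alpha> = s *\<^sub>R a - r *\<^sub>R b"
      using \<open>d \<in> ?D\<close> by blast
    define w where "w = (1 / (1 + r)) *\<^sub>R \<alpha> + (r / (1 + r)) *\<^sub>R b"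
    have "w \<in> \<Omega>"
      unfolding w_def using d assms(3) by (intro convexD[OF conv]) (auto simp: add_divide_distrib[symmetric])
    have "s *\<^sub>R a = (1 + r) *\<^sub>R w"
      using d by (simp add: w_def \<alpha>_eq scaleR_add_right)
    moreover have "(1 + r) *\<^sub>R w \<noteq> 0"
      using \<open>w \<in> \<Omega>\<close> assms(2) d by auto
    moreover from calculation have "0 < s"
      using d(4) by (cases "s = 0") auto
    ultimately have "s = 1 + r"
      using base_normed_space_scaling_unique[OF assms(1) d(2) \<open>w \<in> \<Omega>\<close>] d(5) by simp
    with d show ?thesis by simp
  qed
  moreover have "1 \<in> ?D"
    using assms(3) by (intro CollectI exI[of _ 1] exI[of _ 0] exI[of _ \<alpha>]) simp
  ultimately have "norm \<alpha> = 1"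
    unfolding norm_eq base_norm_eq_Inf_decompositions[OF conv] by (intro cInf_eq_minimum)
  with assms(4) show ?thesis by simp
qed

lemma closed_gen_cone_subset_base:
  assumes "base_normed_space \<Omega>" "0 \<notin> \<Omega>" "\<Omega>o \<subseteq> \<Omega>" "closed \<Omega>o"
  shows "closed (gen_cone \<Omega>o)"
  unfolding closed_sequential_limits
proof (intro allI impI, elim conjE)
  fix x l assume x: "\<forall>n. x n \<in> gen_cone \<Omega>o" and lim: "x \<longlonglongrightarrow> l"
  have normalized: "x n /\<^sub>R norm (x n) \<in> \<Omega>o" if "x n \<noteq> 0" for n
  proof -
    obtain t a where x_eq: "x n = t *\<^sub>R a" and "a \<in> \<Omega>o" "0 \<le> t"
      using x unfolding gen_cone_def by blast
    with assms(3) have "norm (x n) = t"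
      using norm_scaleR_base[OF assms(1,2)] by (simp add: subset_iff)
    moreover from calculation that have "t \<noteq> 0" by auto
    ultimately show ?thesis using x_eq \<open>a \<in> \<Omega>o\<close> by simp
  qed
  show "l \<in> gen_cone \<Omega>o"
  proof (cases "l = 0")
    case True
    obtain a where "a \<in> \<Omega>o" using x unfolding gen_cone_def by blast
    with True show ?thesis
      unfolding gen_cone_def by (intro CollectI exI[of _ 0] exI[of _ a]) simp
  next
    case False
    have ev: "eventually (\<lambda>n. x n /\<^sub>R norm (x n) \<in> \<Omega>o) sequentially"
      using tendsto_imp_eventually_ne[OF lim False] by (rule eventually_mono) (rule normalized)
    have "(\<lambda>n. x n /\<^sub>R norm (x n)) \<longlonglongrightarrow> l /\<^sub>R norm l"
      using lim False by (intro tendsto_intros) auto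
    then have "l /\<^sub>R norm l \<in> \<Omega>o"
      by (rule Lim_in_closed_set[OF assms(4) ev sequentially_bot])
    moreover have "l = norm l *\<^sub>R (l /\<^sub>R norm l)" using False by simp
    ultimately show ?thesis
      unfolding gen_cone_def by (intro CollectI exI[of _ "norm l"] exI[of _ "l /\<^sub>R norm l"]) simp
  qed
qed

lemma gen_cone_eq_cone_hull: "gen_cone S = cone hull S"
  unfolding gen_cone_def cone_hull_expl by blast

definition cone_differences :: "'v::real_vector set \<Rightarrow> 'v set" where
  "cone_differences K = {p - q | p q. p \<in> K \<and> q \<in> K}"

definition decomposition_norm :: "'v::real_normed_vector set \<Rightarrow> 'v \<Rightarrow> real" where
  "decomposition_norm K z = Inf {norm p + norm q | p q. p \<in> K \<and> q \<in> K \<and> z = p - q}"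

lemma cone_convex_add:
  assumes "cone K" "convex K" "p \<in> K" "q \<in> K"
  shows "p + q \<in> K"
  using convex_cone[of K] assms by blast

lemma diff_mem_cone_differences:
  assumes "cone K" "convex K" "u \<in> cone_differences K" "v \<in> cone_differences K"
  shows "u - v \<in> cone_differences K"
proof -
  obtain p q p' q' where "p \<in> K" "q \<in> K" "u = p - q" "p' \<in> K" "q' \<in> K" "v = p' - q'"
    using assms(3,4) unfolding cone_differences_def by blast
  moreover have "p + q' \<in> K" "q + p' \<in> K"
    using calculation cone_convex_add[OF assms(1,2)] by blast+
  moreover have "u - v = (p + q') - (q + p')" using calculation by simp
  ultimately show ?thesis
    unfolding cone_differences_def by blast
qed

lemma decomposition_norm_le:
  assumes "p \<in> K" "q \<in> K"
  shows "decomposition_norm K (p - q) \<le> norm p + norm q"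
  unfolding decomposition_norm_def
  by (rule cInf_lower) (use assms in \<open>auto intro!: bdd_belowI[of _ 0]\<close>)

lemma decomposition_norm_nonneg:
  assumes "z \<in> cone_differences K"
  shows "0 \<le> decomposition_norm K z"
  unfolding decomposition_norm_def
  by (rule cInf_greatest) (use assms in \<open>auto simp: cone_differences_def\<close>)

lemma decomposition_norm_lessE:
  assumes "decomposition_norm K z < e" "z \<in> cone_differences K"
  obtains p q where "p \<in> K" "q \<in> K" "z = p - q" "norm p + norm q < e"
  using cInf_lessD[OF _ assms(1)[unfolded decomposition_norm_def]] assms(2)
  unfolding cone_differences_def by blast

lemma decomposition_norm_diff_le:
  assumes "cone K" "convex K" "u \<in> cone_differences K" "v \<in> cone_differences K"
  shows "decomposition_norm K (u - v) \<le> decomposition_norm K u + decomposition_norm K v"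
proof (rule field_le_epsilon)
  fix e :: real assume "0 < e"
  have "decomposition_norm K u < decomposition_norm K u + e / 2" using \<open>0 < e\<close> by simp
  then obtain p q where pq: "p \<in> K" "q \<in> K" "u = p - q"
    and npq: "norm p + norm q < decomposition_norm K u + e / 2"
    using assms(3) by (rule decomposition_norm_lessE)
  have "decomposition_norm K v < decomposition_norm K v + e / 2" using \<open>0 < e\<close> by simp
  then obtain p' q' where pq': "p' \<in> K" "q' \<in> K" "v = p' - q'"
    and npq': "norm p' + norm q' < decomposition_norm K v + e / 2"
    using assms(4) by (rule decomposition_norm_lessE)
  have "p + q' \<in> K" "q + p' \<in> K"
    using pq pq' cone_convex_add[OF assms(1,2)] by blast+
  moreover have "u - v = (p + q') - (q + p')"
    using pq pq' by simp
  ultimately have "decomposition_norm K (u - v) \<le> norm (p + q') + norm (q + p')"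
    using decomposition_norm_le by metis
  moreover have "norm (p + q') + norm (q + p') \<le> norm p + norm q + (norm p' + norm q')"
    using norm_triangle_ineq[of p q'] norm_triangle_ineq[of q p'] by linarith
  ultimately show "decomposition_norm K (u - v) \<le> decomposition_norm K u + decomposition_norm K v + e"
    using npq npq' by linarith
qed

lemma summable_norm_cancel_complete:
  fixes f :: "nat \<Rightarrow> 'a::real_normed_vector"
  assumes "complete (UNIV :: 'a set)" "summable (\<lambda>n. norm (f n))"
  shows "summable f"
proof -
  let ?S = "\<lambda>n. \<Sum>i<n. f i" and ?T = "\<lambda>n. \<Sum>i<n. norm (f i)"
  have "Cauchy ?T"
    using assms(2) by (simp add: summable_iff_convergent convergent_Cauchy)
  have dist_le_ordered: "dist (?S m) (?S n) \<le> dist (?T m) (?T n)" if "n \<le> m" for m n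
  proof -
    have "?S m - ?S n = sum f {n..<m}" "?T m - ?T n = (\<Sum>i\<in>{n..<m}. norm (f i))"
      using sum_diff_nat_ivl[of 0 n m] that by (simp_all add: atLeast0LessThan)
    moreover have "norm (sum f {n..<m}) \<le> (\<Sum>i\<in>{n..<m}. norm (f i))"
      by (rule norm_sum)
    ultimately show ?thesis by (simp add: dist_norm)
  qed
  have dist_le: "dist (?S m) (?S n) \<le> dist (?T m) (?T n)" for m n
    using dist_le_ordered[of n m] dist_le_ordered[of m n] by (cases "n \<le> m") (simp_all add: dist_commute)
  have "Cauchy ?S"
    unfolding Cauchy_def
  proof (intro allI impI)
    fix e :: real assume "0 < e"
    then obtain M where "\<forall>m\<ge>M. \<forall>n\<ge>M. dist (?T m) (?T n) < e"
      using \<open>Cauchy ?T\<close> unfolding Cauchy_def by blast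
    then show "\<exists>M. \<forall>m\<ge>M. \<forall>n\<ge>M. dist (?S m) (?S n) < e"
      using dist_le le_less_trans by blast
  qed
  then obtain l where "?S \<longlonglongrightarrow> l"
    using assms(1) unfolding complete_def by blast
  then show ?thesis
    unfolding summable_def sums_def by blast
qed

lemma norm_suminf_le_complete:
  fixes f :: "nat \<Rightarrow> 'a::real_normed_vector"
  assumes "complete (UNIV :: 'a set)" "summable (\<lambda>n. norm (f n))"
  shows "norm (suminf f) \<le> (\<Sum>n. norm (f n))"
proof -
  have "(\<lambda>n. norm (\<Sum>i<n. f i)) \<longlonglongrightarrow> norm (suminf f)"
    by (rule tendsto_norm[OF summable_LIMSEQ[OF summable_norm_cancel_complete[OF assms]]])
  moreover have "(\<lambda>n. \<Sum>i<n. norm (f i)) \<longlonglongrightarrow> (\<Sum>n. norm (f n))"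
    by (rule summable_LIMSEQ[OF assms(2)])
  ultimately show ?thesis
    by (rule LIMSEQ_le) (auto intro: norm_sum)
qed

lemma suminf_mem_closed_cone:
  fixes f :: "nat \<Rightarrow> 'v::real_normed_vector"
  assumes "closed K" "cone K" "convex K" "\<And>n. f n \<in> K" "summable f"
  shows "suminf f \<in> K"
proof -
  have "0 \<in> K"
    using assms(2,4) cone_contains_0 by blast
  have "(\<Sum>i<n. f i) \<in> K" for n
    by (induction n) (simp_all add: \<open>0 \<in> K\<close> cone_convex_add assms(2-4))
  then show ?thesis
    by (rule closed_sequentially[OF assms(1) _ summable_LIMSEQ[OF assms(5)]])
qed

lemma geometric_cone_series_tail:
  fixes f :: "nat \<Rightarrow> 'v::real_normed_vector"
  assumes "complete (UNIV :: 'v set)" "closed K" "cone K" "convex K"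
    and "\<And>n. f n \<in> K" "\<And>n. norm (f n) \<le> (1/2)^n"
  shows "summable f" and "(\<Sum>i. f (i + k)) \<in> K" and "norm (\<Sum>i. f (i + k)) \<le> 2 * (1/2)^k"
proof -
  have geometric: "summable (\<lambda>i. (1/2::real)^(i + k))" for k
    unfolding power_add by (intro summable_mult2 summable_geometric) simp
  have norms: "summable (\<lambda>i. norm (f (i + k)))" for k
    by (rule summable_comparison_test'[OF geometric[of k]]) (simp add: assms(6))
  have tail: "summable (\<lambda>i. f (i + k))" for k
    by (rule summable_norm_cancel_complete[OF assms(1) norms])
  from tail[of 0] show "summable f" by simp
  show "(\<Sum>i. f (i + k)) \<in> K"
    by (rule suminf_mem_closed_cone[OF assms(2-4) assms(5) tail])
  have "norm (\<Sum>i. f (i + k)) \<le> (\<Sum>i. norm (f (i + k)))"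
    by (rule norm_suminf_le_complete[OF assms(1) norms])
  also have "\<dots> \<le> (\<Sum>i. (1/2)^(i + k))"
    by (rule suminf_le[OF _ norms geometric]) (rule assms(6))
  also have "\<dots> = 2 * (1/2)^k"
    using suminf_mult2[OF summable_geometric[of "1/2::real"], of "(1/2)^k"]
    by (simp add: power_add suminf_geometric)
  finally show "norm (\<Sum>i. f (i + k)) \<le> 2 * (1/2)^k" .
qed

lemma cone_differences_geometric_limit:
  fixes z :: "nat \<Rightarrow> 'v::real_normed_vector"
  assumes "complete (UNIV :: 'v set)" "closed K" "cone K" "convex K"
    and z: "\<And>k. z k \<in> cone_differences K"
    and steps: "\<And>k. decomposition_norm K (z (Suc k) - z k) < (1/2)^k"
  obtains y where "y \<in> cone_differences K" "\<And>k. decomposition_norm K (y - z k) \<le> 4 * (1/2)^k"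
proof -
  have "\<exists>p q. p \<in> K \<and> q \<in> K \<and> z (Suc k) - z k = p - q \<and> norm p + norm q < (1/2)^k" for k
    using decomposition_norm_lessE[OF steps diff_mem_cone_differences[OF assms(3,4) z z]] by blast
  then obtain p q where pK: "\<And>k. p k \<in> K" and qK: "\<And>k. q k \<in> K"
    and step_eq: "\<And>k. z (Suc k) - z k = p k - q k"
    and small: "\<And>k. norm (p k) + norm (q k) < (1/2)^k"
    by metis
  have "norm (p k) \<le> (1/2)^k" "norm (q k) \<le> (1/2)^k" for k
    using small[of k] norm_ge_zero[of "p k"] norm_ge_zero[of "q k"] by linarith+
  note P = geometric_cone_series_tail[OF assms(1-4) pK this(1)]
    and Q = geometric_cone_series_tail[OF assms(1-4) qK this(2)]
  define y where "y = z 0 + suminf p - suminf q"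
  have tails: "y - z k = (\<Sum>i. p (i + k)) - (\<Sum>i. q (i + k))" for k
  proof -
    have "z k - z 0 = (\<Sum>i<k. p i) - (\<Sum>i<k. q i)"
      using sum_lessThan_telescope[of z k] by (simp add: step_eq sum_subtractf)
    then have "z k = z 0 + (\<Sum>i<k. p i) - (\<Sum>i<k. q i)"
      by (simp add: algebra_simps)
    then show ?thesis
      unfolding y_def suminf_split_initial_segment[OF P(1), of k] suminf_split_initial_segment[OF Q(1), of k]
      by (simp add: algebra_simps)
  qed
  show ?thesis
  proof
    obtain a b where "a \<in> K" "b \<in> K" "z 0 = a - b"
      using z[of 0] unfolding cone_differences_def by blast
    moreover have "suminf p \<in> K" "suminf q \<in> K"
      using P(2)[of 0] Q(2)[of 0] by simp_all
    ultimately have "a + suminf p \<in> K" "b + suminf q \<in> K" "y = (a + suminf p) - (b + suminf q)"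
      using cone_convex_add[OF assms(3,4)] by (auto simp: y_def)
    then show "y \<in> cone_differences K"
      unfolding cone_differences_def by blast
  next
    fix k
    have "decomposition_norm K (y - z k) \<le> norm (\<Sum>i. p (i + k)) + norm (\<Sum>i. q (i + k))"
      unfolding tails by (rule decomposition_norm_le[OF P(2) Q(2)])
    also have "\<dots> \<le> 4 * (1/2)^k"
      using P(3)[of k] Q(3)[of k] by linarith
    finally show "decomposition_norm K (y - z k) \<le> 4 * (1/2)^k" .
  qed
qed

lemma geometric_Cauchy_indices:
  fixes d :: "nat \<Rightarrow> nat \<Rightarrow> real"
  assumes "\<forall>e>0. \<exists>M. \<forall>m\<ge>M. \<forall>n\<ge>M. d m n < e"
  obtains \<phi> :: "nat \<Rightarrow> nat" where "mono \<phi>" "\<And>k m n. \<phi> k \<le> m \<Longrightarrow> \<phi> k \<le> n \<Longrightarrow> d m n < (1/2)^k"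
proof -
  have "\<forall>k. \<exists>M. \<forall>m\<ge>M. \<forall>n\<ge>M. d m n < (1/2)^k"
    using assms by simp
  then obtain M where M: "\<And>k m n. M k \<le> m \<Longrightarrow> M k \<le> n \<Longrightarrow> d m n < (1/2)^k"
    by metis
  define \<phi> where "\<phi> k = (\<Sum>j\<le>k. M j)" for k
  have "mono \<phi>"
    unfolding mono_def \<phi>_def by (auto intro: sum_mono2)
  moreover have M_le: "M k \<le> \<phi> k" for k
    unfolding \<phi>_def by (rule member_le_sum) auto
  have "d m n < (1/2)^k" if "\<phi> k \<le> m" "\<phi> k \<le> n" for k m n
    using that M_le[of k] by (intro M) linarith+
  ultimately show ?thesis
    using that by blast
qed

lemma complete_wrt_decomposition_norm:
  fixes K :: "'v::real_normed_vector set"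
  assumes "complete (UNIV :: 'v set)" "closed K" "cone K" "convex K"
  shows "complete_wrt (decomposition_norm K) (cone_differences K)"
  unfolding complete_wrt_def
proof (intro allI impI, elim conjE)
  let ?N = "decomposition_norm K"
  fix x :: "nat \<Rightarrow> 'v"
  assume x: "\<forall>n. x n \<in> cone_differences K"
    and Cauchy: "\<forall>e>0. \<exists>M. \<forall>m\<ge>M. \<forall>n\<ge>M. ?N (x m - x n) < e"
  note diff_mem = diff_mem_cone_differences[OF assms(3,4)]
  obtain \<phi> where "mono \<phi>" and \<phi>: "\<And>k m n. \<phi> k \<le> m \<Longrightarrow> \<phi> k \<le> n \<Longrightarrow> ?N (x m - x n) < (1/2)^k"
    using geometric_Cauchy_indices[OF Cauchy] by blast
  have "?N (x (\<phi> (Suc k)) - x (\<phi> k)) < (1/2)^k" for k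
    using \<phi> \<open>mono \<phi>\<close> by (simp add: mono_def)
  then obtain y where y: "y \<in> cone_differences K" and near: "\<And>k. ?N (y - x (\<phi> k)) \<le> 4 * (1/2)^k"
    using cone_differences_geometric_limit[OF assms, of "\<lambda>k. x (\<phi> k)"] x by blast
  have bound: "?N (x n - y) \<le> 5 * (1/2)^k" if "\<phi> k \<le> n" for n k
  proof -
    have "?N (x n - y) = ?N ((x n - x (\<phi> k)) - (y - x (\<phi> k)))"
      by simp
    also have "\<dots> \<le> ?N (x n - x (\<phi> k)) + ?N (y - x (\<phi> k))"
      using x y by (intro decomposition_norm_diff_le assms diff_mem) auto
    also have "\<dots> \<le> 5 * (1/2)^k"
      using \<phi>[of k n "\<phi> k"] near[of k] that by simp
    finally show ?thesis .
  qed
  have "(\<lambda>n. ?N (x n - y)) \<longlonglongrightarrow> 0"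
  proof (rule LIMSEQ_I)
    fix e :: real assume "0 < e"
    then obtain k where k: "(1/2::real)^k < e / 5"
      using real_arch_pow_inv[of "e / 5" "1/2"] by auto
    have "norm (?N (x n - y) - 0) < e" if "\<phi> k \<le> n" for n
      using bound[OF that] decomposition_norm_nonneg[OF diff_mem[OF x[rule_format] y]] k by simp
    then show "\<exists>no. \<forall>n\<ge>no. norm (?N (x n - y) - 0) < e"
      by blast
  qed
  with y show "\<exists>y\<in>cone_differences K. (\<lambda>n. ?N (x n - y)) \<longlonglongrightarrow> 0"
    by blast
qed

lemma base_norm_0:
  assumes "convex S" "a \<in> S"
  shows "base_norm S 0 = 0"
proof -
  let ?D = "{s + r | s r a b. a \<in> S \<and> b \<in> S \<and> 0 \<le> s \<and> 0 \<le> r \<and> (0::'a) = s *\<^sub>R a - r *\<^sub>R b}"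
  have "0 \<in> ?D"
    using assms(2) by (intro CollectI exI[of _ "0::real"] exI[of _ a]) simp
  moreover have "0 \<le> d" if "d \<in> ?D" for d
    using that by auto
  ultimately show ?thesis
    unfolding base_norm_eq_Inf_decompositions[OF assms(1)] by (rule cInf_eq_minimum)
qed

lemma base_norm_eq_decomposition_norm:
  assumes "base_normed_space \<Omega>" "0 \<notin> \<Omega>" "\<Omega>o \<subseteq> \<Omega>" "convex \<Omega>o"
  shows "base_norm \<Omega>o = decomposition_norm (gen_cone \<Omega>o)"
proof
  fix z
  have scaling: "norm (t *\<^sub>R a) = t" if "a \<in> \<Omega>o" "0 \<le> t" for a t
    using norm_scaleR_base[OF assms(1,2)] assms(3) that by blast
  have "{s + r | s r a b. a \<in> \<Omega>o \<and> b \<in> \<Omega>o \<and> 0 \<le> s \<and> 0 \<le> r \<and> z = s *\<^sub>R a - r *\<^sub>R b} =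
    {norm p + norm q | p q. p \<in> gen_cone \<Omega>o \<and> q \<in> gen_cone \<Omega>o \<and> z = p - q}"
  proof (intro set_eqI iffI)
    fix d assume "d \<in> {s + r | s r a b. a \<in> \<Omega>o \<and> b \<in> \<Omega>o \<and> 0 \<le> s \<and> 0 \<le> r \<and> z = s *\<^sub>R a - r *\<^sub>R b}"
    then obtain s r a b where d: "d = s + r" and "z = s *\<^sub>R a - r *\<^sub>R b"
      and ab: "a \<in> \<Omega>o" "b \<in> \<Omega>o" and sr: "0 \<le> s" "0 \<le> r"
      by blast
    moreover have "s *\<^sub>R a \<in> gen_cone \<Omega>o" "r *\<^sub>R b \<in> gen_cone \<Omega>o"
      using ab sr unfolding gen_cone_def by blast+
    moreover have "d = norm (s *\<^sub>R a) + norm (r *\<^sub>R b)"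
      using d scaling[OF ab(1) sr(1)] scaling[OF ab(2) sr(2)] by linarith
    ultimately show "d \<in> {norm p + norm q | p q. p \<in> gen_cone \<Omega>o \<and> q \<in> gen_cone \<Omega>o \<and> z = p - q}"
      by blast
  next
    fix d assume "d \<in> {norm p + norm q | p q. p \<in> gen_cone \<Omega>o \<and> q \<in> gen_cone \<Omega>o \<and> z = p - q}"
    then obtain s r a b where d: "d = norm (s *\<^sub>R a) + norm (r *\<^sub>R b)" and "z = s *\<^sub>R a - r *\<^sub>R b"
      and ab: "a \<in> \<Omega>o" "b \<in> \<Omega>o" and sr: "0 \<le> s" "0 \<le> r"
      unfolding gen_cone_def by blast
    moreover have "d = s + r"
      using d scaling[OF ab(1) sr(1)] scaling[OF ab(2) sr(2)] by linarith
    ultimately show "d \<in> {s + r | s r a b. a \<in> \<Omega>o \<and> b \<in> \<Omega>o \<and> 0 \<le> s \<and> 0 \<le> r \<and> z = s *\<^sub>R a - r *\<^sub>R b}"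
      by blast
  qed
  then show "base_norm \<Omega>o z = decomposition_norm (gen_cone \<Omega>o) z"
    by (simp only: base_norm_eq_Inf_decompositions[OF assms(4)] decomposition_norm_def)
qed

lemma cone_differences_subset_0:
  assumes "K \<subseteq> {0}"
  shows "cone_differences K \<subseteq> {0}"
  using assms unfolding cone_differences_def by (auto simp: subset_singleton_iff)

lemma complete_wrt_subset_0:
  assumes "S \<subseteq> {0}" "0 \<in> S \<Longrightarrow> N 0 = 0"
  shows "complete_wrt N S"
  unfolding complete_wrt_def
proof (intro allI impI, elim conjE)
  fix x :: "nat \<Rightarrow> 'a" assume x: "\<forall>n. x n \<in> S"
  then have "\<forall>n. x n = 0"
    using assms(1) by blast
  moreover from calculation x have "0 \<in> S"
    by metis
  ultimately show "\<exists>y\<in>S. (\<lambda>n. N (x n - y)) \<longlonglongrightarrow> 0"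
    using assms(2) by (intro bexI[of _ 0]) simp_all
qed

theorem lemmaC9:
  fixes \<Omega> \<Omega>o :: "'v::real_normed_vector set"
  assumes "base_normed_space \<Omega>"
    and "closed (gen_cone \<Omega>)"
    and "\<Omega>o \<subseteq> \<Omega>" and "convex \<Omega>o" and "closed \<Omega>o"
  shows "closed (gen_cone \<Omega>o) \<and>
         (complete (UNIV :: 'v set) \<longrightarrow>
            complete_wrt (base_norm \<Omega>o)
              {a - b | a b. a \<in> gen_cone \<Omega>o \<and> b \<in> gen_cone \<Omega>o})"
proof (cases "0 \<in> \<Omega>")
  case True
  then have K0: "gen_cone \<Omega>o \<subseteq> {0}"
    using base_normed_space_base_subset_0[OF assms(1)] assms(3) unfolding gen_cone_def by fastforce
  have "complete_wrt (base_norm \<Omega>o) (cone_differences (gen_cone \<Omega>o))"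
  proof (rule complete_wrt_subset_0[OF cone_differences_subset_0[OF K0]])
    assume "0 \<in> cone_differences (gen_cone \<Omega>o)"
    then obtain a where "a \<in> \<Omega>o"
      unfolding cone_differences_def gen_cone_def by blast
    then show "base_norm \<Omega>o 0 = 0"
      by (rule base_norm_0[OF assms(4)])
  qed
  with K0 show ?thesis
    by (simp add: finite_imp_closed finite_subset cone_differences_def)
next
  case False
  have "cone (gen_cone \<Omega>o)" "convex (gen_cone \<Omega>o)"
    by (simp_all add: gen_cone_eq_cone_hull cone_cone_hull convex_cone_hull assms(4))
  moreover have "closed (gen_cone \<Omega>o)"
    using assms(1) False assms(3,5) by (rule closed_gen_cone_subset_base)
  ultimately show ?thesis
    using complete_wrt_decomposition_norm[of "gen_cone \<Omega>o"]
    by (simp add: base_norm_eq_decomposition_norm[OF assms(1) False assms(3,4)] cone_differences_def)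
qed

end
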